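(* Let $g$ be a regular expression over an alphabet of symbols, and let $x$ be a symbol that occurs exactly once (syntactically) in $g$. Let $\bar{x}_L, \bar{x}_R, \bar{y}_L, \bar{y}_R$ be finite (possibly empty) sequences of symbols. If $\bar{x}_L\, x\, \bar{y}_R \in [\![ g ]\!]$ and $\bar{y}_L\, x\, \bar{x}_R \in [\![ g ]\!]$, then $\bar{x}_L\, x\, \bar{x}_R \in [\![ g ]\!]$.
   Context: Regular expressions are generated by: the empty regex $\epsilon$; a single symbol $x_0$; alternation $g_L \mid g_R$; sequencing (concatenation) $g_L\, g_R$; and Kleene star $g_0^*$. The language $[\![ g ]\!]$ is the set of finite symbol sequences denoted by $g$ in the standard way: $[\![\epsilon]\!] = \{\text{empty sequence}\}$, $[\![x_0]\!]=\{x_0\}$, $[\![g_L\mid g_R]\!]=[\![g_L]\!]\cup[\![g_R]\!]$, $[\![g_L\,g_R]\!]$ is the set of concatenations $uv$ with $u\in[\![g_L]\!]$, $v\in[\![g_R]\!]$, and $[\![g_0^*]\!]=\bigcup_{n\ge 0}[\![g_0^n]\!]$ where $g_0^0=\epsilon$ and $g_0^{n+1}=g_0\,g_0^{n}$. Juxtaposition of sequences and symbols denotes concatenation. *)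

theory Defs
  imports Main
begin

datatype 'a rexp = Eps | Sym 'a | Alt "'a rexp" "'a rexp" | Seq "'a rexp" "'a rexp" | Star "'a rexp"

fun pow_lang :: "'a list set \<Rightarrow> nat \<Rightarrow> 'a list set" where
  "pow_lang L 0 = {[]}"
| "pow_lang L (Suc n) = {u @ v | u v. u \<in> L \<and> v \<in> pow_lang L n}"

fun lang :: "'a rexp \<Rightarrow> 'a list set" where
  "lang Eps = {[]}"
| "lang (Sym x) = {[x]}"
| "lang (Alt gl gr) = lang gl \<union> lang gr"
| "lang (Seq gl gr) = {u @ v | u v. u \<in> lang gl \<and> v \<in> lang gr}"
| "lang (Star g) = (\<Union>n. pow_lang (lang g) n)"

fun occ :: "'a \<Rightarrow> 'a rexp \<Rightarrow> nat" where
  "occ x Eps = 0"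
| "occ x (Sym y) = (if x = y then 1 else 0)"
| "occ x (Alt gl gr) = occ x gl + occ x gr"
| "occ x (Seq gl gr) = occ x gl + occ x gr"
| "occ x (Star g) = occ x g"

end

theory Submission
  imports Defs
begin

text \<open>Call a language \<open>L\<close> exchange-closed at \<open>x\<close> if \<open>l x r' \<in> L\<close> and \<open>l' x r \<in> L\<close> imply
  \<open>l x r \<in> L\<close>, i.e. the pairs \<open>(l, r)\<close> with \<open>l x r \<in> L\<close> form a product set. Languages whose
  words avoid \<open>x\<close> and singletons \<open>{[y]}\<close> are exchange-closed; \<open>L\<^sup>*\<close> inherits the property from
  \<open>L\<close>, since a word of \<open>L\<^sup>*\<close> containing \<open>x\<close> factors through one iterate containing it; and
  \<open>A \<union> B\<close>, \<open>A B\<close> inherit it from \<open>A\<close> when the words of \<open>B\<close> avoid \<open>x\<close> (and symmetrically for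
  \<open>B A\<close>), because then \<open>x\<close> always falls into the \<open>A\<close>-part. If \<open>x\<close> occurs once in \<open>g\<close>, at every
  alternation and sequence node one component has no occurrence of \<open>x\<close>, so induction on \<open>g\<close>
  shows that \<open>lang g\<close> is exchange-closed at \<open>x\<close>.\<close>

lemma append_eq_append_Cons_cases:
  assumes "u @ v = l @ x # r"
  obtains b where "u = l @ x # b" "r = b @ v"
    | c where "l = u @ c" "v = c @ x # r"
proof -
  obtain us where "u = l @ us \<and> us @ v = x # r \<or> u @ us = l \<and> v = us @ x # r"
    using assms unfolding append_eq_append_conv2 by blast
  then show thesis
    using that by (cases us) auto
qed

lemma append_eq_append_Cons_notin_right:
  assumes "u @ v = l @ x # r" "x \<notin> set v"
  obtains b where "u = l @ x # b" "r = b @ v"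
  using assms by (cases rule: append_eq_append_Cons_cases) auto

lemma append_eq_append_Cons_notin_left:
  assumes "u @ v = l @ x # r" "x \<notin> set u"
  obtains c where "l = u @ c" "v = c @ x # r"
  using assms by (cases rule: append_eq_append_Cons_cases) auto

abbreviation conc :: "'a list set \<Rightarrow> 'a list set \<Rightarrow> 'a list set" where
  "conc A B \<equiv> {u @ v | u v. u \<in> A \<and> v \<in> B}"

lemma append_in_conc: "u \<in> A \<Longrightarrow> v \<in> B \<Longrightarrow> u @ v \<in> conc A B"
  by blast

lemma notin_set_pow_lang:
  "w \<in> pow_lang L n \<Longrightarrow> (\<And>v. v \<in> L \<Longrightarrow> x \<notin> set v) \<Longrightarrow> x \<notin> set w"
  by (induction n arbitrary: w) auto

lemma occ_eq_0_notin_lang: "occ x g = 0 \<Longrightarrow> w \<in> lang g \<Longrightarrow> x \<notin> set w"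
proof (induction g arbitrary: w)
  case (Star g)
  then show ?case using notin_set_pow_lang[of w "lang g"] by auto
qed (auto split: if_splits)

lemma pow_lang_add:
  "u \<in> pow_lang L k \<Longrightarrow> v \<in> pow_lang L m \<Longrightarrow> u @ v \<in> pow_lang L (k + m)"
proof (induction k arbitrary: u)
  case (Suc k)
  then obtain u1 u2 where "u = u1 @ u2" "u1 \<in> L" "u2 \<in> pow_lang L k" by auto
  then show ?case using Suc.IH[of u2] Suc.prems by auto
qed simp

lemma pow_lang_split_at:
  assumes "l @ x # r \<in> pow_lang L n"
  obtains k m p a b s where "p \<in> pow_lang L k" "a @ x # b \<in> L" "s \<in> pow_lang L m"
    "l = p @ a" "r = b @ s"
  using assms
proof (induction n arbitrary: l thesis)
  case (Suc n)
  then obtain u v where uv: "u @ v = l @ x # r" "u \<in> L" "v \<in> pow_lang L n" by auto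
  from uv(1) show thesis
  proof (cases rule: append_eq_append_Cons_cases)
    case (1 b)
    then show thesis using Suc.prems(1)[of "[]" 0 l b v n] uv by auto
  next
    case (2 c)
    with uv(3) Suc.IH obtain k m p a b s where
      "p \<in> pow_lang L k" "a @ x # b \<in> L" "s \<in> pow_lang L m" "c = p @ a" "r = b @ s"
      by metis
    moreover from this have "u @ p \<in> pow_lang L (Suc k)" using uv(2) by auto
    ultimately show thesis using 2 Suc.prems(1)[of "u @ p" "Suc k" a b s m] by simp
  qed
qed simp

definition exchange_closed :: "'a \<Rightarrow> 'a list set \<Rightarrow> bool" where
  "exchange_closed x L \<longleftrightarrow> (\<forall>l r l' r'. l @ x # r' \<in> L \<longrightarrow> l' @ x # r \<in> L \<longrightarrow> l @ x # r \<in> L)"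

lemma exchange_closedI:
  "(\<And>l r l' r'. l @ x # r' \<in> L \<Longrightarrow> l' @ x # r \<in> L \<Longrightarrow> l @ x # r \<in> L) \<Longrightarrow> exchange_closed x L"
  unfolding exchange_closed_def by blast

lemma exchange_closedD:
  "exchange_closed x L \<Longrightarrow> l @ x # r' \<in> L \<Longrightarrow> l' @ x # r \<in> L \<Longrightarrow> l @ x # r \<in> L"
  unfolding exchange_closed_def by blast

lemma exchange_closed_if_notin_set: "(\<And>w. w \<in> L \<Longrightarrow> x \<notin> set w) \<Longrightarrow> exchange_closed x L"
  by (rule exchange_closedI) fastforce

lemma exchange_closed_singleton: "exchange_closed x {[y]}"
  by (rule exchange_closedI) (auto simp: append_eq_Cons_conv)

lemma exchange_closed_Un:
  assumes "exchange_closed x A" "\<And>w. w \<in> B \<Longrightarrow> x \<notin> set w"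
  shows "exchange_closed x (A \<union> B)"
proof (rule exchange_closedI)
  fix l r l' r'
  assume "l @ x # r' \<in> A \<union> B" "l' @ x # r \<in> A \<union> B"
  then have "l @ x # r' \<in> A" "l' @ x # r \<in> A"
    using assms(2) by fastforce+
  with assms(1) have "l @ x # r \<in> A"
    by (rule exchange_closedD)
  then show "l @ x # r \<in> A \<union> B" ..
qed

lemma exchange_closed_conc_left:
  assumes "exchange_closed x A" "\<And>w. w \<in> B \<Longrightarrow> x \<notin> set w"
  shows "exchange_closed x (conc A B)"
proof (rule exchange_closedI)
  fix l r l' r'
  assume "l @ x # r' \<in> conc A B" "l' @ x # r \<in> conc A B"
  then obtain u v u' v' where uv: "u @ v = l @ x # r'" "u \<in> A" "v \<in> B"
    and uv': "u' @ v' = l' @ x # r" "u' \<in> A" "v' \<in> B"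
    by auto
  obtain b where b: "u = l @ x # b" "r' = b @ v"
    by (rule append_eq_append_Cons_notin_right[OF uv(1) assms(2)[OF uv(3)]])
  obtain b' where b': "u' = l' @ x # b'" "r = b' @ v'"
    by (rule append_eq_append_Cons_notin_right[OF uv'(1) assms(2)[OF uv'(3)]])
  have "l @ x # b' \<in> A"
    using assms(1) uv(2) uv'(2) unfolding b(1) b'(1) by (rule exchange_closedD)
  from append_in_conc[OF this uv'(3)] show "l @ x # r \<in> conc A B"
    unfolding b'(2) by simp
qed

lemma exchange_closed_conc_right:
  assumes "\<And>w. w \<in> A \<Longrightarrow> x \<notin> set w" "exchange_closed x B"
  shows "exchange_closed x (conc A B)"
proof (rule exchange_closedI)
  fix l r l' r'
  assume "l @ x # r' \<in> conc A B" "l' @ x # r \<in> conc A B"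
  then obtain u v u' v' where uv: "u @ v = l @ x # r'" "u \<in> A" "v \<in> B"
    and uv': "u' @ v' = l' @ x # r" "u' \<in> A" "v' \<in> B"
    by auto
  obtain c where c: "l = u @ c" "v = c @ x # r'"
    by (rule append_eq_append_Cons_notin_left[OF uv(1) assms(1)[OF uv(2)]])
  obtain c' where c': "l' = u' @ c'" "v' = c' @ x # r"
    by (rule append_eq_append_Cons_notin_left[OF uv'(1) assms(1)[OF uv'(2)]])
  have "c @ x # r \<in> B"
    using assms(2) uv(3) uv'(3) unfolding c(2) c'(2) by (rule exchange_closedD)
  from append_in_conc[OF uv(2) this] show "l @ x # r \<in> conc A B"
    unfolding c(1) by simp
qed

lemma exchange_closed_star:
  assumes "exchange_closed x L"
  shows "exchange_closed x (\<Union>n. pow_lang L n)"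
proof (rule exchange_closedI)
  fix l r l' r'
  assume "l @ x # r' \<in> (\<Union>n. pow_lang L n)" "l' @ x # r \<in> (\<Union>n. pow_lang L n)"
  then obtain n n' where "l @ x # r' \<in> pow_lang L n" "l' @ x # r \<in> pow_lang L n'"
    by blast
  obtain k m p a b s where
    "p \<in> pow_lang L k" "a @ x # b \<in> L" "s \<in> pow_lang L m" "l = p @ a" "r' = b @ s"
    by (rule pow_lang_split_at[OF \<open>l @ x # r' \<in> pow_lang L n\<close>])
  obtain k' m' p' a' b' s' where
    "p' \<in> pow_lang L k'" "a' @ x # b' \<in> L" "s' \<in> pow_lang L m'" "l' = p' @ a'" "r = b' @ s'"
    by (rule pow_lang_split_at[OF \<open>l' @ x # r \<in> pow_lang L n'\<close>])
  have "a @ x # b' \<in> L"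
    using assms \<open>a @ x # b \<in> L\<close> \<open>a' @ x # b' \<in> L\<close> by (rule exchange_closedD)
  then have "(a @ x # b') @ s' \<in> pow_lang L (Suc m')"
    using \<open>s' \<in> pow_lang L m'\<close> unfolding pow_lang.simps by (rule append_in_conc)
  with \<open>p \<in> pow_lang L k\<close> have "p @ (a @ x # b') @ s' \<in> pow_lang L (k + Suc m')"
    by (rule pow_lang_add)
  then have "l @ x # r \<in> pow_lang L (k + Suc m')"
    using \<open>l = p @ a\<close> \<open>r = b' @ s'\<close> by simp
  then show "l @ x # r \<in> (\<Union>n. pow_lang L n)"
    by blast
qed

lemma exchange_closed_lang: "occ x g \<le> 1 \<Longrightarrow> exchange_closed x (lang g)"
proof (induction g)
  case Eps
  show ?case by (rule exchange_closed_if_notin_set) simp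
next
  case (Sym y)
  show ?case by (simp add: exchange_closed_singleton)
next
  case (Alt g1 g2)
  consider "occ x g1 \<le> 1" "occ x g2 = 0" | "occ x g1 = 0" "occ x g2 \<le> 1"
    using Alt.prems by fastforce
  then show ?case
  proof cases
    case 1
    from exchange_closed_Un[OF Alt.IH(1)[OF 1(1)] occ_eq_0_notin_lang[OF 1(2)]]
    show ?thesis by simp
  next
    case 2
    from exchange_closed_Un[OF Alt.IH(2)[OF 2(2)] occ_eq_0_notin_lang[OF 2(1)]]
    show ?thesis by (simp add: Un_commute)
  qed
next
  case (Seq g1 g2)
  consider "occ x g1 \<le> 1" "occ x g2 = 0" | "occ x g1 = 0" "occ x g2 \<le> 1"
    using Seq.prems by fastforce
  then show ?case
  proof cases
    case 1
    from exchange_closed_conc_left[OF Seq.IH(1)[OF 1(1)] occ_eq_0_notin_lang[OF 1(2)]]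
    show ?thesis by simp
  next
    case 2
    from exchange_closed_conc_right[OF occ_eq_0_notin_lang[OF 2(1)] Seq.IH(2)[OF 2(2)]]
    show ?thesis by simp
  qed
next
  case (Star g)
  then show ?case by (simp add: exchange_closed_star)
qed

theorem mainTheorem1:
  fixes g :: "'a rexp" and x :: 'a and xL xR yL yR :: "'a list"
  assumes "occ x g = 1"
    and "xL @ [x] @ yR \<in> lang g"
    and "yL @ [x] @ xR \<in> lang g"
  shows "xL @ [x] @ xR \<in> lang g"
proof -
  have "exchange_closed x (lang g)"
    using assms(1) by (simp add: exchange_closed_lang)
  then show ?thesis
    using assms(2,3) exchange_closedD[of x "lang g" xL yR yL xR] by simp
qed

end
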